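(* Let $w\in\widehat W_{\mathrm{reg}}$ and $i\in\{0,\dots,l\}$, and put $\sigma=ws_i$. Then $\ker(\mathrm{id}-\tilde\sigma)$ is one-dimensional, the range $\mathrm{ran}(\mathrm{id}-\sigma)=\{x-\sigma(x)\mid x\in V\}$ is an affine hyperplane, and \[V_{w,i}=V_{\sigma,i}\subset\mathrm{ran}(\mathrm{id}-\sigma).\] Moreover $n_{w,i}$ is a normal vector to the affine hyperplane $\mathrm{ran}(\mathrm{id}-\sigma)$, and $\langle n_{w,i},\alpha_i^\vee\rangle=1$.
   Context: $V$ is a finite-dimensional real Euclidean space, $W$ an irreducible Weyl group acting on $V$ with simple roots $\alpha_1,\dots,\alpha_l$, highest root $\alpha_{\max}$, $\alpha_0:=-\alpha_{\max}$, $\alpha^\vee=2\alpha/\langle\alpha,\alpha\rangle$. Alcove $A=\{x\mid\langle\alpha_i,x\rangle+\delta_{i,0}>0,\ i=0,\dots,l\}$; $A_i$ is its face where $\langle\alpha_i,x\rangle+\delta_{i,0}=0$ and the other inequalities are strict. $\widehat W$ is generated by $s_i(x)=x-(\langle\alpha_i,x\rangle+\delta_{i,0})\alpha_i^\vee$. For $w\in\widehat W$, $\tilde w(x)=w(x)-w(0)$ is its linear part. $V_{w,i}=(\mathrm{id}-w)(A_i)$. $\widehat W_{\mathrm{reg}}=\{w\mid \mathrm{id}-\tilde w\text{ invertible}\}$, and for $w\in\widehat W_{\mathrm{reg}}$, $n_{w,i}:=(\mathrm{id}-\tilde w^{-1})^{-1}(\alpha_i)$. *)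

theory Defs
  imports "HOL-Analysis.Analysis"
begin

definition coroot :: "'a::euclidean_space \<Rightarrow> 'a" where
  "coroot a = (2 / (a \<bullet> a)) *\<^sub>R a"

definition refl :: "'a::euclidean_space \<Rightarrow> 'a \<Rightarrow> 'a" where
  "refl a x = x - (a \<bullet> x) *\<^sub>R coroot a"

definition root_system :: "'a::euclidean_space set \<Rightarrow> bool" where
  "root_system R \<longleftrightarrow> finite R \<and> 0 \<notin> R \<and> span R = UNIV
     \<and> (\<forall>a\<in>R. \<forall>b\<in>R. refl a b \<in> R)
     \<and> (\<forall>a\<in>R. \<forall>b\<in>R. b \<bullet> coroot a \<in> \<int>)
     \<and> (\<forall>a\<in>R. \<forall>c. c *\<^sub>R a \<in> R \<longrightarrow> c = 1 \<or> c = -1)"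

definition irreducible_rs :: "'a::euclidean_space set \<Rightarrow> bool" where
  "irreducible_rs R \<longleftrightarrow> \<not> (\<exists>R1 R2. R1 \<noteq> {} \<and> R2 \<noteq> {} \<and> R = R1 \<union> R2
       \<and> (\<forall>a\<in>R1. \<forall>b\<in>R2. a \<bullet> b = 0))"

definition simple_roots :: "'a::euclidean_space set \<Rightarrow> (nat \<Rightarrow> 'a) \<Rightarrow> nat \<Rightarrow> bool" where
  "simple_roots R \<alpha> l \<longleftrightarrow> \<alpha> ` {1..l} \<subseteq> R \<and> inj_on \<alpha> {1..l}
     \<and> independent (\<alpha> ` {1..l})
     \<and> (\<forall>b\<in>R. \<exists>c::nat \<Rightarrow> int.
          ((\<forall>i\<in>{1..l}. c i \<ge> 0) \<or> (\<forall>i\<in>{1..l}. c i \<le> 0))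
          \<and> b = (\<Sum>i=1..l. of_int (c i) *\<^sub>R \<alpha> i))"

definition highest_root :: "'a::euclidean_space set \<Rightarrow> (nat \<Rightarrow> 'a) \<Rightarrow> nat \<Rightarrow> 'a \<Rightarrow> bool" where
  "highest_root R \<alpha> l m \<longleftrightarrow> m \<in> R \<and>
     (\<forall>b\<in>R. \<exists>c::nat \<Rightarrow> int. (\<forall>i\<in>{1..l}. c i \<ge> 0)
          \<and> m - b = (\<Sum>i=1..l. of_int (c i) *\<^sub>R \<alpha> i))"

text \<open>Here \<open>\<alpha> 0 = - \<alpha>_max\<close>.\<close>
definition aff_s :: "(nat \<Rightarrow> 'a::euclidean_space) \<Rightarrow> nat \<Rightarrow> 'a \<Rightarrow> 'a" where
  "aff_s \<alpha> i x = x - (\<alpha> i \<bullet> x + (if i = 0 then 1 else 0)) *\<^sub>R coroot (\<alpha> i)"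

inductive_set affW :: "(nat \<Rightarrow> 'a::euclidean_space) \<Rightarrow> nat \<Rightarrow> ('a \<Rightarrow> 'a) set"
  for \<alpha> l where
  id_in: "id \<in> affW \<alpha> l"
| step: "w \<in> affW \<alpha> l \<Longrightarrow> i \<le> l \<Longrightarrow> aff_s \<alpha> i \<circ> w \<in> affW \<alpha> l"

definition lin_part :: "('a::real_vector \<Rightarrow> 'a) \<Rightarrow> 'a \<Rightarrow> 'a" where
  "lin_part w x = w x - w 0"

definition alcove_face :: "(nat \<Rightarrow> 'a::euclidean_space) \<Rightarrow> nat \<Rightarrow> nat \<Rightarrow> 'a set" where
  "alcove_face \<alpha> l i = {x. \<alpha> i \<bullet> x + (if i = 0 then 1 else 0) = 0
      \<and> (\<forall>j\<le>l. j \<noteq> i \<longrightarrow> \<alpha> j \<bullet> x + (if j = 0 then 1 else 0) > 0)}"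

definition Vwi :: "(nat \<Rightarrow> 'a::euclidean_space) \<Rightarrow> nat \<Rightarrow> ('a \<Rightarrow> 'a) \<Rightarrow> nat \<Rightarrow> 'a set" where
  "Vwi \<alpha> l w i = (\<lambda>x. x - w x) ` alcove_face \<alpha> l i"

definition regular :: "('a::euclidean_space \<Rightarrow> 'a) \<Rightarrow> bool" where
  "regular w \<longleftrightarrow> bij (\<lambda>x. x - lin_part w x)"

definition nwi :: "(nat \<Rightarrow> 'a::euclidean_space) \<Rightarrow> ('a \<Rightarrow> 'a) \<Rightarrow> nat \<Rightarrow> 'a" where
  "nwi \<alpha> w i = inv (\<lambda>x. x - inv (lin_part w) x) (\<alpha> i)"

definition affine_hyperplane :: "'a::euclidean_space set \<Rightarrow> bool" where
  "affine_hyperplane S \<longleftrightarrow> (\<exists>a b. a \<noteq> 0 \<and> S = {y. a \<bullet> y = b})"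

end

theory Submission
  imports Defs
begin

(* Every element of the affine Weyl group is an affine isometry
   w x = L x + w 0 with L orthogonal, and w is regular iff D = id - L is
   bijective.  For sigma = w o s_i the linear part is L o r, where r is the
   reflection in a = alpha_i, and
       x - L (r x) = D x + (a . x) L(a^vee).
   With n = (id - L^-1)^-1 a one has the two key identities
       a . n = |a|^2 / 2          and      a . D^-1 z = n . z,
   the second saying that D^-1 and (id - L^-1)^-1 are adjoint.  From them
   the linear map id - L o r has range n^perp and kernel spanned by
   D^-1 (L a^vee), and n . a^vee = 1.  The theorem follows by translating back
   to the affine map sigma and observing that s_i fixes the face A_i pointwise. *)

lemma affine_simple_root_nonzero:
  assumes "root_system R" "simple_roots R \<alpha> l" "highest_root R \<alpha> l (- \<alpha> 0)" "i \<le> l"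
  shows "\<alpha> i \<noteq> 0"
proof -
  have "- \<alpha> 0 \<in> R" using assms(3) by (simp add: highest_root_def)
  moreover have "\<alpha> ` {1..l} \<subseteq> R" using assms(2) by (simp add: simple_roots_def)
  ultimately have "\<alpha> i \<in> R \<or> - \<alpha> i \<in> R"
    using assms(4) by (cases "i = 0") auto
  moreover have "0 \<notin> R" using assms(1) by (simp add: root_system_def)
  ultimately show ?thesis by force
qed

lemma orthogonal_transformation_refl: "orthogonal_transformation (refl a)"
proof -
  have "linear (refl a)"
    unfolding refl_def
    by (intro linear_compose_sub linear_ident)
       (auto intro!: linearI simp: inner_add_right algebra_simps)
  moreover have "refl a v \<bullet> refl a u = v \<bullet> u" for v u
  proof (cases "a \<bullet> a = 0")
    case True
    then show ?thesis by (simp add: refl_def coroot_def)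
  next
    case False
    then show ?thesis
      by (simp add: refl_def coroot_def inner_diff_left inner_diff_right
                    algebra_simps inner_commute power2_eq_square)
  qed
  ultimately show ?thesis by (simp add: orthogonal_transformation_def)
qed

lemma linear_refl: "linear (refl a)"
  using orthogonal_transformation_refl orthogonal_transformation_linear by blast

lemma aff_s_affine: "aff_s \<alpha> i x = refl (\<alpha> i) x + aff_s \<alpha> i 0"
  by (simp add: aff_s_def refl_def algebra_simps)

lemma affine_comp:
  assumes "linear L" and "\<And>x. w x = L x + w 0" and "\<And>x. s x = r x + s 0"
  shows "(w \<circ> s) x = (L \<circ> r) x + (w \<circ> s) 0"
proof -
  have "(w \<circ> s) x = L (r x + s 0) + w 0" using assms(2)[of "s x"] assms(3)[of x] by simp
  also have "\<dots> = L (r x) + (L (s 0) + w 0)" by (simp add: linear_add[OF assms(1)])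
  also have "L (s 0) + w 0 = (w \<circ> s) 0" using assms(2)[of "s 0"] by simp
  finally show ?thesis by simp
qed

lemma affW_affine_isometry:
  assumes "w \<in> affW \<alpha> l"
  obtains L where "orthogonal_transformation L" and "\<And>x. w x = L x + w 0"
proof -
  from assms have "\<exists>L. orthogonal_transformation L \<and> (\<forall>x. w x = L x + w 0)"
  proof induction
    case id_in
    show ?case by (intro exI[of _ id]) (simp add: orthogonal_transformation_id)
  next
    case (step w i)
    then obtain L where L: "orthogonal_transformation L" "\<And>x. w x = L x + w 0"
      by blast
    have "orthogonal_transformation (refl (\<alpha> i) \<circ> L)"
      using L(1) orthogonal_transformation_refl orthogonal_transformation_compose by blast
    moreover have "(aff_s \<alpha> i \<circ> w) x = (refl (\<alpha> i) \<circ> L) x + (aff_s \<alpha> i \<circ> w) 0" for x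
      using linear_refl aff_s_affine L(2) by (rule affine_comp)
    ultimately show ?case by blast
  qed
  then show thesis using that by blast
qed

lemma lin_part_affine:
  assumes "\<And>x. w x = L x + w 0"
  shows "lin_part w = L"
proof
  fix x
  show "lin_part w x = L x" using assms[of x] by (simp add: lin_part_def)
qed

lemma range_translate_hyperplane:
  fixes n c :: "'a::real_inner"
  assumes "\<And>x. F x = G x - c" and "range G = {z. n \<bullet> z = 0}"
  shows "range F = {y. n \<bullet> y = - (n \<bullet> c)}"
proof -
  have "range F = (\<lambda>z. z - c) ` range G"
    unfolding image_image assms(1) ..
  also have "\<dots> = {y. n \<bullet> y = - (n \<bullet> c)}"
    unfolding assms(2)
  proof (intro set_eqI iffI)
    fix y assume "y \<in> (\<lambda>z. z - c) ` {z. n \<bullet> z = 0}"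
    then show "y \<in> {y. n \<bullet> y = - (n \<bullet> c)}" by (auto simp: inner_diff_right)
  next
    fix y assume "y \<in> {y. n \<bullet> y = - (n \<bullet> c)}"
    then have "y + c \<in> {z. n \<bullet> z = 0}" by (simp add: inner_add_right)
    then show "y \<in> (\<lambda>z. z - c) ` {z. n \<bullet> z = 0}" by (rule rev_image_eqI) simp
  qed
  finally show ?thesis .
qed

lemma aff_s_fixes_face:
  assumes "x \<in> alcove_face \<alpha> l i"
  shows "aff_s \<alpha> i x = x"
  using assms by (simp add: alcove_face_def aff_s_def)

lemma Vwi_comp_aff_s: "Vwi \<alpha> l (w \<circ> aff_s \<alpha> i) i = Vwi \<alpha> l w i"
  unfolding Vwi_def by (rule image_cong) (simp_all add: aff_s_fixes_face)

section \<open>Regular orthogonal maps twisted by a reflection\<close>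

locale regular_orthogonal =
  fixes L :: "'a::euclidean_space \<Rightarrow> 'a"
  assumes orth: "orthogonal_transformation L"
    and reg: "bij (\<lambda>x. x - L x)"
begin

definition D :: "'a \<Rightarrow> 'a" where "D x = x - L x"
definition D' :: "'a \<Rightarrow> 'a" where "D' x = x - inv L x"

lemma linear_L: "linear L"
  using orth orthogonal_transformation_linear by blast

lemma linear_Linv: "linear (inv L)"
  using orth orthogonal_transformation_inv orthogonal_transformation_linear by blast

lemma L_Linv [simp]: "L (inv L x) = x"
  using orth orthogonal_transformation_surj surj_f_inv_f by metis

lemma Linv_L [simp]: "inv L (L x) = x"
  using orth orthogonal_transformation_inj inv_f_f by metis

lemma L_adjoint: "L x \<bullet> u = x \<bullet> inv L u"
  by (metis L_Linv orth orthogonal_transformation_def)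

lemma norm_Linv: "inv L u \<bullet> inv L u = u \<bullet> u"
  by (metis L_adjoint L_Linv inner_commute)

lemma bij_D: "bij D"
  using reg by (simp add: D_def[abs_def])

lemma linear_D: "linear D"
  unfolding D_def[abs_def] by (intro linear_compose_sub linear_ident linear_L)

lemma D_invD [simp]: "D (inv D z) = z"
  by (meson bij_D bij_is_surj surj_f_inv_f)

lemma invD_D [simp]: "inv D (D x) = x"
  by (meson bij_D bij_is_inj inv_f_f)

lemma linear_invD: "linear (inv D)"
  using linear_D bij_D bij_is_inj inj_linear_imp_inv_linear by blast

lemma D'_eq: "D' x = - inv L (D x)"
  by (simp add: D_def D'_def linear_diff[OF linear_Linv])

lemma bij_D': "bij D'"
proof -
  have "bij (inv L)"
    using orth orthogonal_transformation_inv orthogonal_transformation_bij by blast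
  then have "bij (uminus \<circ> inv L \<circ> D)" by (intro bij_comp bij_D bij_uminus)
  moreover have "D' = uminus \<circ> inv L \<circ> D" by (simp add: fun_eq_iff D'_eq)
  ultimately show ?thesis by simp
qed

lemma D'_invD' [simp]: "D' (inv D' v) = v"
  by (meson bij_D' bij_is_surj surj_f_inv_f)

text \<open>The quadratic identity \<open>v \<bullet> D'\<^sup>-\<^sup>1 v = |v|\<^sup>2 / 2\<close>: writing \<open>v = u - L\<^sup>-\<^sup>1 u\<close>,
  both \<open>|v|\<^sup>2\<close> and \<open>2 v \<bullet> u\<close> equal \<open>2|u|\<^sup>2 - 2 u \<bullet> L\<^sup>-\<^sup>1 u\<close>.\<close>
lemma inner_invD': "v \<bullet> inv D' v = (v \<bullet> v) / 2"
proof -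
  define u where "u = inv D' v"
  have v: "v = u - inv L u" using D'_invD'[of v] by (simp add: D'_def u_def)
  have "v \<bullet> v = 2 * (u \<bullet> u) - 2 * (u \<bullet> inv L u)"
    unfolding v using norm_Linv[of u]
    by (simp add: inner_diff_left inner_diff_right inner_commute)
  moreover have "v \<bullet> u = u \<bullet> u - u \<bullet> inv L u"
    unfolding v by (simp add: inner_diff_left inner_diff_right inner_commute)
  ultimately show ?thesis by (simp add: u_def)
qed

lemma invD_adjoint: "u \<bullet> inv D z = inv D' u \<bullet> z"
proof -
  define p q where "p = inv D z" and "q = inv D' u"
  have "z = p - L p" using D_invD[of z] by (simp add: D_def p_def)
  moreover have "u = q - inv L q" using D'_invD'[of u] by (simp add: D'_def q_def)
  ultimately have "u \<bullet> p = q \<bullet> z"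
    using L_adjoint[of p q] by (simp add: inner_diff_left inner_diff_right inner_commute)
  then show ?thesis by (simp add: p_def q_def)
qed

context
  fixes a :: 'a
  assumes a_nonzero: "a \<noteq> 0"
begin

definition n :: 'a where "n = inv D' a"

lemma Linv_n: "inv L n = n - a"
  using D'_invD'[of a] by (simp add: n_def D'_def algebra_simps)

lemma n_coroot: "n \<bullet> coroot a = 1"
  using inner_invD'[of a] a_nonzero
  by (simp add: n_def coroot_def inner_commute)

lemma twisted_eq: "x - L (refl a x) = D x + (a \<bullet> x) *\<^sub>R L (coroot a)"
  by (simp add: refl_def D_def linear_diff[OF linear_L] linear_cmul[OF linear_L])

lemma n_D: "n \<bullet> D x = a \<bullet> x"
  using L_adjoint[of x n] Linv_n by (simp add: D_def inner_diff_left inner_diff_right inner_commute)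

lemma n_L_coroot: "n \<bullet> L (coroot a) = -1"
proof -
  have "a \<bullet> coroot a = 2" using a_nonzero by (simp add: coroot_def)
  then show ?thesis
    using L_adjoint[of "coroot a" n] Linv_n n_coroot
    by (simp add: inner_diff_right inner_commute)
qed

lemma twisted_range: "range (\<lambda>x. x - L (refl a x)) = {z. n \<bullet> z = 0}"
proof (intro set_eqI iffI)
  fix z assume "z \<in> range (\<lambda>x. x - L (refl a x))"
  then show "z \<in> {z. n \<bullet> z = 0}"
    using n_D n_L_coroot by (auto simp: twisted_eq inner_add_right)
next
  fix z assume "z \<in> {z. n \<bullet> z = 0}"
  then have "a \<bullet> inv D z = 0" by (simp add: invD_adjoint n_def[symmetric])
  then have "z = inv D z - L (refl a (inv D z))" by (simp add: twisted_eq)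
  then show "z \<in> range (\<lambda>x. x - L (refl a x))" by blast
qed

lemma twisted_kernel:
  defines "x0 \<equiv> inv D (L (coroot a))"
  shows "{x. x - L (refl a x) = 0} = span {x0}" and "x0 \<noteq> 0"
proof -
  have a_x0: "a \<bullet> x0 = -1"
    using n_L_coroot by (simp add: x0_def invD_adjoint n_def[symmetric])
  then show "x0 \<noteq> 0" by auto
  show "{x. x - L (refl a x) = 0} = span {x0}"
  proof (intro set_eqI iffI)
    fix x assume "x \<in> {x. x - L (refl a x) = 0}"
    then have "D x = (- (a \<bullet> x)) *\<^sub>R L (coroot a)"
      by (simp add: twisted_eq eq_neg_iff_add_eq_0)
    then have "x = (- (a \<bullet> x)) *\<^sub>R x0"
      by (metis invD_D x0_def linear_cmul[OF linear_invD])
    then show "x \<in> span {x0}" by (metis span_base span_scale singletonI)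
  next
    fix x assume "x \<in> span {x0}"
    then obtain k where "x = k *\<^sub>R x0" by (auto simp: span_singleton)
    then show "x \<in> {x. x - L (refl a x) = 0}"
      using a_x0 by (simp add: twisted_eq x0_def linear_cmul[OF linear_D])
  qed
qed

lemma twisted_kernel_dim: "dim {x. x - L (refl a x) = 0} = 1"
  using twisted_kernel by simp

end

end

theorem lemma3p2:
  fixes R :: "'a::euclidean_space set" and \<alpha> :: "nat \<Rightarrow> 'a"
    and l :: nat and w :: "'a \<Rightarrow> 'a" and i :: nat
  assumes "root_system R" and "irreducible_rs R"
    and "l = DIM('a)"
    and "simple_roots R \<alpha> l"
    and "highest_root R \<alpha> l (- \<alpha> 0)"
    and "w \<in> affW \<alpha> l" and "regular w"
    and "i \<le> l"
  defines "\<sigma> \<equiv> w \<circ> aff_s \<alpha> i"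
  shows "dim {x. x - lin_part \<sigma> x = 0} = 1
    \<and> affine_hyperplane (range (\<lambda>x. x - \<sigma> x))
    \<and> Vwi \<alpha> l w i = Vwi \<alpha> l \<sigma> i
    \<and> Vwi \<alpha> l \<sigma> i \<subseteq> range (\<lambda>x. x - \<sigma> x)
    \<and> (\<exists>b. range (\<lambda>x. x - \<sigma> x) = {y. nwi \<alpha> w i \<bullet> y = b})
    \<and> nwi \<alpha> w i \<bullet> coroot (\<alpha> i) = 1"
proof -
  obtain L where L: "orthogonal_transformation L" and w: "\<And>x. w x = L x + w 0"
    using affW_affine_isometry[OF assms(6)] by blast
  have lin_w: "lin_part w = L" using w by (rule lin_part_affine)
  have "bij (\<lambda>x. x - L x)" using assms(7) unfolding regular_def lin_w .
  with L interpret regular_orthogonal L by unfold_locales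
  have a: "\<alpha> i \<noteq> 0" using affine_simple_root_nonzero assms(1,4,5,8) .
  have nw: "nwi \<alpha> w i = n (\<alpha> i)"
    by (simp add: nwi_def n_def[OF a] D'_def[abs_def] lin_w)
  have \<sigma>: "\<sigma> x = (L \<circ> refl (\<alpha> i)) x + \<sigma> 0" for x
    unfolding \<sigma>_def using linear_L w aff_s_affine by (rule affine_comp)
  then have "lin_part \<sigma> = L \<circ> refl (\<alpha> i)" by (rule lin_part_affine)
  then have kernel: "dim {x. x - lin_part \<sigma> x = 0} = 1"
    using twisted_kernel_dim[OF a] by simp
  have range: "range (\<lambda>x. x - \<sigma> x) = {y. n (\<alpha> i) \<bullet> y = - (n (\<alpha> i) \<bullet> \<sigma> 0)}"
    by (rule range_translate_hyperplane[OF _ twisted_range[OF a]]) (subst \<sigma>, simp)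
  have "n (\<alpha> i) \<noteq> 0" using n_coroot[OF a] by auto
  then have hyperplane: "affine_hyperplane (range (\<lambda>x. x - \<sigma> x))"
    unfolding affine_hyperplane_def range by blast
  have V_eq: "Vwi \<alpha> l w i = Vwi \<alpha> l \<sigma> i"
    unfolding \<sigma>_def by (rule Vwi_comp_aff_s[symmetric])
  have V_sub: "Vwi \<alpha> l \<sigma> i \<subseteq> range (\<lambda>x. x - \<sigma> x)" by (auto simp: Vwi_def)
  show ?thesis
    unfolding nw using kernel hyperplane V_eq V_sub range n_coroot[OF a] by blast
qed

end
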